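(* Fix an integer $q\ge 2$ and let $\theta = 1-q^{-1}$. There is a constant $C_q>0$ such that \[ \lim_{n\to\infty}\ \sup_{t}\ \frac{n\,A_q(n,2t+1)}{H_q(n,t)} = 0, \] where the supremum is over integers $t$ with $10\sqrt{n} < t \le \theta n - C_q\sqrt{n\log n}$; that is, $A_q(n, 2t+1) = o\!\left( H_q(n,t)/n\right)$ uniformly in this range of $t$.
   Context: $A_q(n,d)$ is the maximum size of a subset of $[q]^n$ whose elements pairwise have Hamming distance (number of differing coordinates) at least $d$. $V_q(n,r) = \sum_{i=0}^{r}\binom{n}{i}(q-1)^i$ and $H_q(n,t) = q^n / V_q(n,t)$. $\log$ is the natural logarithm. *)

theory Defs
  imports "HOL-Analysis.Analysis"
begin

definition words :: "nat \<Rightarrow> nat \<Rightarrow> nat list set" where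
  "words q n = {xs. length xs = n \<and> set xs \<subseteq> {0..<q}}"

definition hamming :: "nat list \<Rightarrow> nat list \<Rightarrow> nat" where
  "hamming xs ys = card {i. i < length xs \<and> xs ! i \<noteq> ys ! i}"

definition A_code :: "nat \<Rightarrow> nat \<Rightarrow> nat \<Rightarrow> nat" where
  "A_code q n d = Max {card C | C. C \<subseteq> words q n \<and>
      (\<forall>x\<in>C. \<forall>y\<in>C. x \<noteq> y \<longrightarrow> hamming x y \<ge> d)}"

definition V_ball :: "nat \<Rightarrow> nat \<Rightarrow> nat \<Rightarrow> real" where
  "V_ball q n r = (\<Sum>i=0..r. real (n choose i) * (real q - 1) ^ i)"

definition H_bound :: "nat \<Rightarrow> nat \<Rightarrow> nat \<Rightarrow> real" where
  "H_bound q n t = real q ^ n / V_ball q n t"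

end

theory Submission
  imports Defs "HOL-Real_Asymp.Real_Asymp"
begin

text \<open>Let \<open>\<theta> = 1 - 1/q\<close>. For \<open>t \<le> \<theta>n - 8\<surd>(n log n)\<close> a Chernoff estimate gives
  \<open>V\<^sub>q(n,t) \<le> q\<^sup>n / n\<^sup>8\<close>. If \<open>2t+1 > \<theta>n\<close>, the Plotkin bound together with integrality of
  \<open>q(2t+1) - (q-1)n\<close> gives \<open>A\<^sub>q(n,2t+1) \<le> q(2t+1)\<close>, which is enough. Otherwise we run the
  Elias--Bassalygo argument with radius \<open>w = t + k\<close>, \<open>k = \<lfloor>t\<^sup>2/4n\<rfloor>\<close>: some translate of the sphere
  of radius \<open>w\<close> contains at least \<open>A S\<^sub>w / q\<^sup>n\<close> codewords, and by the Johnson bound at most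
  \<open>2t+1\<close>. Comparing with \<open>V\<^sub>q(n,t) \<le> (t+1) f\<^sup>k S\<^sub>w\<close>, where \<open>f = w/((n-w)(q-1))\<close> is the ratio of
  consecutive sphere sizes, leaves \<open>n A / H \<le> n(t+1)(2t+1) f\<^sup>k\<close>; since \<open>f \<le> 1/2\<close> and
  \<open>f \<le> 3t/n\<close>, this is \<open>o(1)\<close> uniformly in \<open>t > 10\<surd>n\<close>.\<close>

section \<open>Words and Hamming distance\<close>

lemma finite_words: "finite (words q n)"
  unfolding words_def using finite_lists_length_eq[of "{0..<q}" n] by (simp add: conj_commute)

lemma card_words: "card (words q n) = q ^ n"
  unfolding words_def using card_lists_length_eq[of "{0..<q}" n] by (simp add: conj_commute)

lemma length_words: "x \<in> words q n \<Longrightarrow> length x = n"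
  by (simp add: words_def)

lemma nth_words_less: "x \<in> words q n \<Longrightarrow> i < n \<Longrightarrow> x ! i < q"
  unfolding words_def by (auto dest: nth_mem)

lemma replicate_zero_in_words: "0 < q \<Longrightarrow> replicate n 0 \<in> words q n"
  by (auto simp: words_def)

lemma Cons_in_words_Suc_iff: "a # xs \<in> words q (Suc n) \<longleftrightarrow> a < q \<and> xs \<in> words q n"
  by (auto simp: words_def)

lemma words_Suc: "words q (Suc n) = (\<lambda>(a, xs). a # xs) ` ({0..<q} \<times> words q n)"
proof -
  have "x \<in> (\<lambda>(a, xs). a # xs) ` ({0..<q} \<times> words q n)" if "x \<in> words q (Suc n)" for x
    using that by (cases x) (auto simp: words_def)
  then show ?thesis by (auto simp: words_def)
qed

lemma hamming_eq_sum:
  assumes "length x = n"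
  shows "real (hamming x y) = (\<Sum>i<n. of_bool (x ! i \<noteq> y ! i))"
proof -
  have "{i. i < length x \<and> x ! i \<noteq> y ! i} = {i\<in>{..<n}. x ! i \<noteq> y ! i}"
    using assms by auto
  then show ?thesis
    unfolding hamming_def by (simp add: of_bool_def sum.If_cases Int_def)
qed

lemma hamming_Cons:
  assumes "length xs = length ys"
  shows "hamming (a # xs) (b # ys) = of_bool (a \<noteq> b) + hamming xs ys"
proof -
  have "real (hamming (a # xs) (b # ys)) = (\<Sum>i<Suc (length ys). of_bool ((a # xs) ! i \<noteq> (b # ys) ! i))"
    using assms by (intro hamming_eq_sum) simp
  also have "\<dots> = of_bool (a \<noteq> b) + (\<Sum>i<length ys. of_bool (xs ! i \<noteq> ys ! i))"
    by (simp only: sum.lessThan_Suc_shift nth_Cons_0 nth_Cons_Suc)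
  also have "\<dots> = real (of_bool (a \<noteq> b) + hamming xs ys)"
    using hamming_eq_sum[OF assms] by simp
  finally show ?thesis by (simp only: of_nat_eq_iff)
qed

lemma card_hamming_sphere:
  assumes "x \<in> words q n"
  shows "card {y \<in> words q n. hamming x y = w} = (n choose w) * (q - 1) ^ w"
  using assms
proof (induction n arbitrary: x w)
  case 0
  then have "x = []" "words q 0 = {[]}"
    by (auto simp: words_def)
  then show ?case by (cases w) (auto simp: hamming_def)
next
  case (Suc n)
  obtain a xs where x: "x = a # xs" and a: "a < q" and xs: "xs \<in> words q n"
    using Suc.prems by (cases x) (auto simp: Cons_in_words_Suc_iff dest: length_words)
  define S where "S v = {y \<in> words q n. hamming xs y = v}" for v
  define P where "P = {a} \<times> S w \<union> ({0..<q} - {a}) \<times> (if w = 0 then {} else S (w - 1))"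
  have hamming_x: "hamming x (b # ys) = of_bool (a \<noteq> b) + hamming xs ys" if "ys \<in> words q n" for b ys
    using that xs by (simp add: x hamming_Cons length_words)
  have "{y \<in> words q (Suc n). hamming x y = w} = (\<lambda>(b, ys). b # ys) ` P" (is "?L = _")
  proof (intro equalityI subsetI)
    fix y assume "y \<in> ?L"
    then obtain b ys where "y = b # ys" "b < q" "ys \<in> words q n" "hamming x y = w"
      by (auto simp: words_Suc)
    then show "y \<in> (\<lambda>(b, ys). b # ys) ` P"
      by (cases "a = b") (auto simp: P_def S_def hamming_x intro!: image_eqI[of _ _ "(b, ys)"])
  next
    fix y assume "y \<in> (\<lambda>(b, ys). b # ys) ` P"
    then show "y \<in> ?L"
      using a by (auto simp: P_def S_def hamming_x words_Suc split: if_splits)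
  qed
  moreover have "inj_on (\<lambda>(b, ys). b # ys) P"
    by (auto simp: inj_on_def)
  moreover have "card P = card (S w) + (q - 1) * (if w = 0 then 0 else card (S (w - 1)))"
    using a finite_words unfolding P_def S_def
    by (subst card_Un_disjoint) (auto simp: card_cartesian_product)
  ultimately have "card {y \<in> words q (Suc n). hamming x y = w}
      = card (S w) + (q - 1) * (if w = 0 then 0 else card (S (w - 1)))"
    by (simp add: card_image)
  moreover have "(Suc n choose w) * r ^ w
      = (n choose w) * r ^ w + r * (if w = 0 then 0 else (n choose (w - 1)) * r ^ (w - 1))" for r
    by (cases w) (simp_all add: algebra_simps)
  ultimately show ?case
    using Suc.IH[OF xs] by (simp add: S_def)
qed

lemma sum_card_code_on_spheres:
  assumes "C \<subseteq> words q n"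
  shows "(\<Sum>z\<in>words q n. card {c \<in> C. hamming c z = w}) = card C * ((n choose w) * (q - 1) ^ w)"
proof -
  have "finite C"
    using assms finite_words finite_subset by blast
  have "(\<Sum>z\<in>words q n. card {c \<in> C. hamming c z = w})
      = (\<Sum>z\<in>words q n. \<Sum>c\<in>C. of_bool (hamming c z = w))"
    using \<open>finite C\<close> by (simp add: Int_def)
  also have "\<dots> = (\<Sum>c\<in>C. \<Sum>z\<in>words q n. of_bool (hamming c z = w))"
    by (rule sum.swap)
  also have "\<dots> = (\<Sum>c\<in>C. card {z \<in> words q n. hamming c z = w})"
    using finite_words by (simp add: Int_def)
  also have "\<dots> = card C * ((n choose w) * (q - 1) ^ w)"
    using assms by (simp add: card_hamming_sphere subset_iff)
  finally show ?thesis .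
qed

lemma exists_center_with_dense_sphere:
  assumes "0 < q" and "C \<subseteq> words q n"
  shows "\<exists>z\<in>words q n. card C * ((n choose w) * (q - 1) ^ w) \<le> card {c \<in> C. hamming c z = w} * q ^ n"
proof (rule ccontr)
  assume "\<not> ?thesis"
  then have "(\<Sum>z\<in>words q n. card {c \<in> C. hamming c z = w} * q ^ n)
      < (\<Sum>z\<in>words q n. card C * ((n choose w) * (q - 1) ^ w))"
    using replicate_zero_in_words[OF assms(1), of n] finite_words
    by (intro sum_strict_mono) (auto simp: not_le)
  then show False
    using sum_card_code_on_spheres[OF assms(2)] by (simp add: card_words flip: sum_distrib_right)
qed

section \<open>Distance sums: the Plotkin and Johnson bounds\<close>

text \<open>With \<open>m c\<close> the size of the colour class \<open>c\<close>, there are \<open>(card B)\<^sup>2 - \<Sum> m c\<^sup>2\<close> ordered pairs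
  of different colours, and Cauchy--Schwarz over the \<open>q - 1\<close> colours other than \<open>a\<close> gives
  \<open>\<Sum>\<^bsub>c \<noteq> a\<^esub> m c\<^sup>2 \<ge> s\<^sup>2/(q - 1)\<close>.\<close>

lemma sum_pairs_different_colour_le:
  fixes col :: "'a \<Rightarrow> nat" and s :: real
  assumes q: "2 \<le> q" and B: "finite B" and col: "col ` B \<subseteq> {..<q}" and a: "a < q"
  defines "s \<equiv> card {x \<in> B. col x \<noteq> a}"
  shows "(\<Sum>x\<in>B. \<Sum>y\<in>B. of_bool (col x \<noteq> col y)) \<le> 2 * card B * s - s\<^sup>2 * q / (real q - 1)"
proof -
  define m where "m c = real (card {x \<in> B. col x = c})" for c
  define M where "M = real (card B)"
  have class_sum: "(\<Sum>c<q. m c * g c) = (\<Sum>x\<in>B. g (col x))" for g :: "nat \<Rightarrow> real"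
    using sum.group[OF B finite_lessThan col, of "\<lambda>x. g (col x)"] by (simp add: m_def)
  have "(\<Sum>x\<in>B. \<Sum>y\<in>B. of_bool (col x = col y) :: real) = (\<Sum>x\<in>B. m (col x))"
    using B by (simp add: m_def Int_def eq_commute)
  also have "\<dots> = (\<Sum>c<q. (m c)\<^sup>2)"
    using class_sum[of m] by (simp add: power2_eq_square)
  finally have same: "(\<Sum>x\<in>B. \<Sum>y\<in>B. of_bool (col x = col y) :: real) = (\<Sum>c<q. (m c)\<^sup>2)" .
  have total: "(\<Sum>c<q. m c) = M"
    using class_sum[of "\<lambda>_. 1"] by (simp add: M_def)
  have "card B = card {x \<in> B. col x = a} + card {x \<in> B. col x \<noteq> a}"
    using B by (subst card_Un_disjoint[symmetric]) (auto intro: arg_cong[where f = card])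
  then have ma: "m a = M - s"
    by (simp add: m_def M_def s_def)
  have rest: "(\<Sum>c\<in>{..<q} - {a}. m c) = s"
    using total ma a by (simp add: sum.remove)
  have rest_sq: "(\<Sum>c<q. (m c)\<^sup>2) = (M - s)\<^sup>2 + (\<Sum>c\<in>{..<q} - {a}. (m c)\<^sup>2)"
    using ma a by (simp add: sum.remove)
  have "s\<^sup>2 \<le> (\<Sum>c\<in>{..<q} - {a}. (m c)\<^sup>2) * (real q - 1)"
    using sum_squared_le_sum_of_squares[of m "{..<q} - {a}"] a by (simp add: rest of_nat_diff)
  then have "s\<^sup>2 / (real q - 1) \<le> (\<Sum>c\<in>{..<q} - {a}. (m c)\<^sup>2)"
    using q by (simp add: divide_le_eq)
  moreover have "(\<Sum>x\<in>B. \<Sum>y\<in>B. of_bool (col x \<noteq> col y)) = M\<^sup>2 - (\<Sum>c<q. (m c)\<^sup>2)"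
    unfolding of_bool_not_iff sum_subtractf same by (simp add: M_def power2_eq_square)
  moreover have "M\<^sup>2 - (M - s)\<^sup>2 - s\<^sup>2 / (real q - 1) = 2 * M * s - s\<^sup>2 * q / (real q - 1)"
    using q by (simp add: field_simps power2_eq_square)
  ultimately show ?thesis
    using rest_sq by (simp add: M_def)
qed

lemma sum_hamming_code_ge:
  assumes B: "finite B" and dist: "\<forall>x\<in>B. \<forall>y\<in>B. x \<noteq> y \<longrightarrow> d \<le> hamming x y"
  shows "card B * (real (card B) - 1) * d \<le> (\<Sum>x\<in>B. \<Sum>y\<in>B. real (hamming x y))"
proof -
  have "(real (card B) - 1) * d \<le> (\<Sum>y\<in>B. real (hamming x y))" if x: "x \<in> B" for x
  proof -
    have "1 \<le> card B"
      using B x by (auto simp: Suc_le_eq card_gt_0_iff)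
    then have "(real (card B) - 1) * d = (\<Sum>y\<in>B - {x}. real d)"
      using B x by (simp add: card_Diff_singleton of_nat_diff)
    also have "\<dots> \<le> (\<Sum>y\<in>B - {x}. real (hamming x y))"
      using dist x by (intro sum_mono) auto
    also have "\<dots> \<le> (\<Sum>y\<in>B. real (hamming x y))"
      using B by (intro sum_mono2) auto
    finally show ?thesis .
  qed
  then show ?thesis
    using sum_mono[of B "\<lambda>_. (real (card B) - 1) * d"] by (simp add: mult.assoc)
qed

lemma sum_hamming_le_sum_columns:
  fixes s :: "nat \<Rightarrow> real"
  assumes q: "2 \<le> q" and B: "B \<subseteq> words q n" and z: "z \<in> words q n"
  defines "s i \<equiv> card {x \<in> B. x ! i \<noteq> z ! i}"
  shows "(\<Sum>x\<in>B. \<Sum>y\<in>B. real (hamming x y)) \<le> (\<Sum>i<n. 2 * card B * s i - (s i)\<^sup>2 * q / (real q - 1))"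
proof -
  have fin: "finite B"
    using B finite_words finite_subset by blast
  have "(\<Sum>x\<in>B. \<Sum>y\<in>B. real (hamming x y)) = (\<Sum>x\<in>B. \<Sum>y\<in>B. \<Sum>i<n. of_bool (x ! i \<noteq> y ! i))"
    using B by (intro sum.cong refl hamming_eq_sum) (auto intro: length_words)
  also have "\<dots> = (\<Sum>x\<in>B. \<Sum>i<n. \<Sum>y\<in>B. of_bool (x ! i \<noteq> y ! i))"
    by (rule sum.cong[OF refl], rule sum.swap)
  also have "\<dots> = (\<Sum>i<n. \<Sum>x\<in>B. \<Sum>y\<in>B. of_bool (x ! i \<noteq> y ! i))"
    by (rule sum.swap)
  also have "\<dots> \<le> (\<Sum>i<n. 2 * card B * s i - (s i)\<^sup>2 * q / (real q - 1))"
    unfolding s_def using B z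
    by (intro sum_mono sum_pairs_different_colour_le[OF q fin]) (auto intro: nth_words_less)
  finally show ?thesis .
qed

lemma sum_columns_eq_sum_hamming:
  assumes "B \<subseteq> words q n" and "z \<in> words q n"
  shows "(\<Sum>i<n. real (card {x \<in> B. x ! i \<noteq> z ! i})) = (\<Sum>x\<in>B. real (hamming x z))"
proof -
  have "finite B"
    using assms(1) finite_words finite_subset by blast
  then have "(\<Sum>i<n. real (card {x \<in> B. x ! i \<noteq> z ! i})) = (\<Sum>i<n. \<Sum>x\<in>B. of_bool (x ! i \<noteq> z ! i))"
    by (simp add: Int_def)
  also have "\<dots> = (\<Sum>x\<in>B. \<Sum>i<n. of_bool (x ! i \<noteq> z ! i))"
    by (rule sum.swap)
  also have "\<dots> = (\<Sum>x\<in>B. real (hamming x z))"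
    using assms(1) by (intro sum.cong refl hamming_eq_sum[symmetric]) (auto intro: length_words)
  finally show ?thesis .
qed

lemma mult_diff_le_of_mult_pred_le:
  fixes M d c :: real
  assumes "M * (M - 1) * d \<le> M * M * c" and "0 \<le> M" and "0 \<le> d"
  shows "M * (d - c) \<le> d"
proof (cases "M = 0")
  case False
  then have "(M - 1) * d \<le> M * c"
    using assms by (simp add: mult.assoc mult_le_cancel_left)
  then show ?thesis
    by (simp add: algebra_simps)
qed (use assms in simp)

theorem plotkin_bound:
  assumes q: "2 \<le> q" and B: "B \<subseteq> words q n"
    and dist: "\<forall>x\<in>B. \<forall>y\<in>B. x \<noteq> y \<longrightarrow> d \<le> hamming x y"
  shows "card B * (d - (1 - 1 / q) * n) \<le> d"
proof -
  define M where "M = real (card B)"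
  define s where "s i = real (card {x \<in> B. x ! i \<noteq> replicate n 0 ! i})" for i
  have "finite B"
    using B finite_words finite_subset by blast
  then have "M * (M - 1) * d \<le> (\<Sum>x\<in>B. \<Sum>y\<in>B. real (hamming x y))"
    using sum_hamming_code_ge[OF _ dist] by (simp add: M_def)
  also have "\<dots> \<le> (\<Sum>i<n. 2 * M * s i - (s i)\<^sup>2 * q / (real q - 1))"
    using sum_hamming_le_sum_columns[OF q B replicate_zero_in_words] q by (simp add: M_def s_def)
  also have "\<dots> \<le> (\<Sum>i<n. M * M * (1 - 1 / q))"
  proof (intro sum_mono)
    fix i
    have "0 \<le> q / (real q - 1) * (s i - (1 - 1 / q) * M)\<^sup>2"
      using q by simp
    also have "\<dots> = (s i)\<^sup>2 * q / (real q - 1) - 2 * M * s i + M * M * (1 - 1 / q)"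
      using q by (simp add: field_simps power2_eq_square)
    finally show "2 * M * s i - (s i)\<^sup>2 * q / (real q - 1) \<le> M * M * (1 - 1 / q)"
      by simp
  qed
  also have "\<dots> = M * M * ((1 - 1 / q) * n)"
    by simp
  finally have "M * (d - (1 - 1 / q) * n) \<le> d"
    by (rule mult_diff_le_of_mult_pred_le) (simp_all add: M_def mult_ac)
  then show ?thesis
    by (simp add: M_def)
qed

theorem johnson_bound_on_sphere:
  assumes q: "2 \<le> q" and n: "0 < n" and B: "B \<subseteq> words q n" and z: "z \<in> words q n"
    and dist: "\<forall>x\<in>B. \<forall>y\<in>B. x \<noteq> y \<longrightarrow> d \<le> hamming x y"
    and sphere: "\<forall>x\<in>B. hamming x z = w"
  shows "card B * (d - 2 * w + real w ^ 2 / n) \<le> d"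
proof -
  define M where "M = real (card B)"
  define s where "s i = real (card {x \<in> B. x ! i \<noteq> z ! i})" for i
  have column_total: "(\<Sum>i<n. s i) = M * w"
    using sum_columns_eq_sum_hamming[OF B z] sphere by (simp add: s_def M_def)
  have "finite B"
    using B finite_words finite_subset by blast
  then have "M * (M - 1) * d \<le> (\<Sum>x\<in>B. \<Sum>y\<in>B. real (hamming x y))"
    using sum_hamming_code_ge[OF _ dist] by (simp add: M_def)
  also have "\<dots> \<le> (\<Sum>i<n. 2 * M * s i - (s i)\<^sup>2 * q / (real q - 1))"
    using sum_hamming_le_sum_columns[OF q B z] by (simp add: M_def s_def)
  also have "\<dots> \<le> (\<Sum>i<n. 2 * M * s i - (s i)\<^sup>2)"
  proof (intro sum_mono)
    fix i
    have "(s i)\<^sup>2 * 1 \<le> (s i)\<^sup>2 * (q / (real q - 1))"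
      using q by (intro mult_left_mono) (auto simp: le_divide_eq)
    then show "2 * M * s i - (s i)\<^sup>2 * q / (real q - 1) \<le> 2 * M * s i - (s i)\<^sup>2"
      by simp
  qed
  also have "\<dots> = 2 * M * (M * w) - (\<Sum>i<n. (s i)\<^sup>2)"
    by (simp add: sum_subtractf column_total flip: sum_distrib_left)
  also have "\<dots> \<le> 2 * M * (M * w) - (M * w)\<^sup>2 / n"
    using sum_squared_le_sum_of_squares[of s "{..<n}"] n by (simp add: column_total divide_le_eq)
  also have "\<dots> = M * M * (2 * real w - real w ^ 2 / n)"
    by (simp add: algebra_simps power2_eq_square)
  finally have "M * (d - (2 * real w - real w ^ 2 / n)) \<le> d"
    by (rule mult_diff_le_of_mult_pred_le) (simp_all add: M_def)
  moreover have "real d - 2 * real w + real w ^ 2 / n = d - (2 * real w - real w ^ 2 / n)"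
    by simp
  ultimately show ?thesis
    by (simp only: M_def)
qed

section \<open>Volumes of Hamming balls\<close>

lemma V_ball_pos:
  assumes "1 \<le> q"
  shows "0 < V_ball q n t"
proof -
  have "0 \<le> (\<Sum>i\<in>{0..t} - {0}. real (n choose i) * (real q - 1) ^ i)"
    using assms by (intro sum_nonneg) auto
  then show ?thesis
    unfolding V_ball_def by (simp add: sum.remove[of _ 0])
qed

lemma V_ball_le_generating_function:
  assumes q: "1 \<le> q" and x: "0 < x" "x \<le> 1" and t: "t \<le> n"
  shows "V_ball q n t \<le> (1 + (real q - 1) * x) ^ n / x ^ t"
proof -
  have "V_ball q n t \<le> (\<Sum>i=0..t. real (n choose i) * ((real q - 1) * x) ^ i / x ^ t)"
    unfolding V_ball_def
  proof (intro sum_mono)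
    fix i assume "i \<in> {0..t}"
    then have "1 \<le> x ^ i / x ^ t"
      using x by (simp add: power_decreasing)
    moreover have "0 \<le> real (n choose i) * (real q - 1) ^ i"
      using q by simp
    ultimately show "real (n choose i) * (real q - 1) ^ i \<le> real (n choose i) * ((real q - 1) * x) ^ i / x ^ t"
      using mult_left_mono[of 1 "x ^ i / x ^ t"] by (fastforce simp: power_mult_distrib)
  qed
  also have "\<dots> \<le> (\<Sum>i\<le>n. real (n choose i) * ((real q - 1) * x) ^ i / x ^ t)"
    using t q x by (intro sum_mono2) auto
  also have "\<dots> = ((real q - 1) * x + 1) ^ n / x ^ t"
    by (simp add: binomial_ring sum_divide_distrib)
  finally show ?thesis
    by (simp add: add.commute)
qed

lemma V_ball_tail_bound:
  assumes q: "2 \<le> q" and \<delta>: "0 < \<delta>" "\<delta> \<le> real n" and t: "real t + \<delta> \<le> (1 - 1 / real q) * real n"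
  shows "V_ball q n t / real q ^ n \<le> exp (- \<delta>\<^sup>2 / (8 * real n))"
proof -
  define \<theta> where "\<theta> = 1 - 1 / real q"
  define e where "e = \<delta> / (4 * n)"
  have \<theta>: "0 < \<theta>" "\<theta> \<le> 1"
    using q by (auto simp: \<theta>_def)
  have n: "0 < real n"
    using \<delta> by linarith
  have e: "0 < e" "e \<le> 1 / 4"
    using \<delta> n by (auto simp: e_def field_simps)
  have "\<theta> * n \<le> n"
    using \<theta> by (simp add: mult_left_le_one_le)
  then have tn: "real t \<le> n"
    using t \<delta> unfolding \<theta>_def by linarith
  have "V_ball q n t \<le> (1 + (real q - 1) * (1 - e)) ^ n / (1 - e) ^ t"
    using e tn q by (intro V_ball_le_generating_function) auto
  also have "1 + (real q - 1) * (1 - e) = q * (1 - \<theta> * e)"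
    using q by (simp add: \<theta>_def field_simps)
  finally have "V_ball q n t / real q ^ n \<le> (1 - \<theta> * e) ^ n / (1 - e) ^ t"
    using q by (simp add: divide_le_eq power_mult_distrib mult.commute)
  also have "\<dots> \<le> exp (- \<theta> * e) ^ n / exp (- e - 2 * e\<^sup>2) ^ t"
  proof (intro frac_le power_mono)
    show "1 - \<theta> * e \<le> exp (- \<theta> * e)"
      using exp_ge_add_one_self[of "- \<theta> * e"] by simp
    show "exp (- e - 2 * e\<^sup>2) \<le> 1 - e"
      using ln_one_minus_pos_lower_bound[of e] e by (simp add: ln_ge_iff)
    show "0 \<le> 1 - \<theta> * e"
      using \<theta> e mult_mono[of \<theta> 1 e "1 / 4"] by simp
  qed auto
  also have "\<dots> = exp (- \<theta> * e * n + t * (e + 2 * e\<^sup>2))"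
    by (simp add: exp_of_nat_mult[symmetric] exp_diff[symmetric] algebra_simps)
  also have "\<dots> \<le> exp (- \<delta>\<^sup>2 / (8 * real n))"
  proof -
    have "t * e \<le> (\<theta> * n - \<delta>) * e" and "t * (2 * e\<^sup>2) \<le> n * (2 * e\<^sup>2)"
      using t tn e by (simp_all add: \<theta>_def mult_right_mono)
    then have "- \<theta> * e * n + t * (e + 2 * e\<^sup>2) \<le> - \<delta> * e + 2 * n * e\<^sup>2"
      by (simp add: algebra_simps)
    also have "\<dots> = - \<delta>\<^sup>2 / (8 * real n)"
      using n by (simp add: e_def field_simps power2_eq_square)
    finally show ?thesis
      by simp
  qed
  finally show ?thesis .
qed

definition sphere_size :: "nat \<Rightarrow> nat \<Rightarrow> nat \<Rightarrow> real" where
  "sphere_size q n w = real (n choose w) * (real q - 1) ^ w"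

lemma V_ball_eq_sum_sphere_size: "V_ball q n t = (\<Sum>i=0..t. sphere_size q n i)"
  by (simp add: V_ball_def sphere_size_def)

lemma sphere_size_eq: "1 \<le> q \<Longrightarrow> sphere_size q n w = real ((n choose w) * (q - 1) ^ w)"
  by (simp add: sphere_size_def of_nat_diff)

lemma sphere_size_le_ratio:
  fixes j w n :: nat
  assumes q: "2 \<le> q" and j: "j < w" and w: "w < n"
  shows "sphere_size q n j \<le> w / ((real n - w) * (real q - 1)) * sphere_size q n (Suc j)"
proof -
  define a where "a = real (n choose j)"
  define b where "b = real (n choose Suc j)"
  have pascal: "b * (real j + 1) = a * (real n - real j)"
  proof -
    have "Suc j * (n choose Suc j) = (n - j) * (n choose j)"
      using times_binomial_minus1_eq[of "Suc j" n] binomial_absorb_comp[of n j] by simp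
    then have "real (Suc j * (n choose Suc j)) = real ((n - j) * (n choose j))"
      by (rule arg_cong)
    then show ?thesis
      using j w by (simp add: a_def b_def of_nat_diff algebra_simps)
  qed
  have "(real j + 1) * (a * (real n - w)) = a * ((real j + 1) * (real n - w))"
    by (simp add: ac_simps)
  also have "\<dots> \<le> a * (real w * (real n - real j))"
    using j w by (intro mult_left_mono mult_mono) (auto simp: a_def)
  also have "\<dots> = (real j + 1) * (real w * b)"
    by (metis pascal mult.commute mult.left_commute)
  finally have "a * (real n - w) \<le> real w * b"
    by (simp add: mult_le_cancel_left_pos)
  then have "a \<le> w / (real n - w) * b"
    using w by (simp add: field_simps)
  then have "a * (real q - 1) ^ j \<le> w / (real n - w) * b * (real q - 1) ^ j"
    using q by (intro mult_right_mono) auto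
  also have "\<dots> = w / ((real n - w) * (real q - 1)) * (b * (real q - 1) ^ Suc j)"
  proof -
    have "x / D * b * r ^ j = x / (D * r) * (b * r ^ Suc j)" if "r \<noteq> 0" for x D r :: real
      using that by (cases "D = 0") (simp_all add: field_simps)
    then show ?thesis
      using q by simp
  qed
  finally show ?thesis
    by (simp add: sphere_size_def a_def b_def)
qed

lemma sphere_size_le_power_ratio:
  fixes w n m :: nat
  assumes q: "2 \<le> q" and w: "w < n" and m: "m \<le> w"
  shows "sphere_size q n (w - m) \<le> (w / ((real n - w) * (real q - 1))) ^ m * sphere_size q n w"
  using m
proof (induction m)
  case (Suc m)
  let ?f = "w / ((real n - w) * (real q - 1))"
  have "sphere_size q n (w - Suc m) \<le> ?f * sphere_size q n (w - m)"
    using sphere_size_le_ratio[OF q _ w, of "w - Suc m"] Suc.prems by (simp add: Suc_diff_Suc)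
  also have "\<dots> \<le> ?f * (?f ^ m * sphere_size q n w)"
    using Suc q w by (intro mult_left_mono) auto
  finally show ?case
    by simp
qed simp

lemma V_ball_le_sphere_size:
  fixes f :: real
  assumes q: "2 \<le> q" and w: "t + k < n" and f: "f = real (t + k) / ((real n - real (t + k)) * (real q - 1))"
    and f1: "f \<le> 1"
  shows "V_ball q n t \<le> (t + 1) * f ^ k * sphere_size q n (t + k)"
proof -
  have f0: "0 \<le> f"
    using f w q by simp
  have "V_ball q n t \<le> (\<Sum>i=0..t. f ^ k * sphere_size q n (t + k))"
    unfolding V_ball_eq_sum_sphere_size
  proof (intro sum_mono)
    fix i assume i: "i \<in> {0..t}"
    then have "sphere_size q n i \<le> f ^ (t + k - i) * sphere_size q n (t + k)"
      using sphere_size_le_power_ratio[OF q w, of "t + k - i"] f by simp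
    also have "\<dots> \<le> f ^ k * sphere_size q n (t + k)"
      using i f0 f1 q by (intro mult_right_mono power_decreasing) (auto simp: sphere_size_def)
    finally show "sphere_size q n i \<le> f ^ k * sphere_size q n (t + k)" .
  qed
  then show ?thesis
    by (simp add: mult.assoc add.commute)
qed

section \<open>Bounds on codes of minimum distance \<open>2t+1\<close>\<close>

lemma obtain_optimal_code:
  obtains C where "C \<subseteq> words q n" and "\<forall>x\<in>C. \<forall>y\<in>C. x \<noteq> y \<longrightarrow> d \<le> hamming x y"
    and "A_code q n d = card C"
proof -
  define codes where "codes = {C. C \<subseteq> words q n \<and> (\<forall>x\<in>C. \<forall>y\<in>C. x \<noteq> y \<longrightarrow> d \<le> hamming x y)}"
  have "codes \<subseteq> Pow (words q n)"
    by (auto simp: codes_def)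
  then have "finite codes"
    using finite_words finite_subset by blast
  moreover have "{} \<in> codes"
    by (simp add: codes_def)
  moreover have "A_code q n d = Max (card ` codes)"
    unfolding A_code_def codes_def by (simp add: setcompr_eq_image)
  ultimately have "A_code q n d \<in> card ` codes"
    by (metis Max_in empty_iff finite_imageI image_is_empty)
  then show ?thesis
    using that by (auto simp: codes_def)
qed

lemma card_code_le_of_plotkin_regime:
  assumes q: "2 \<le> q" and B: "B \<subseteq> words q n"
    and dist: "\<forall>x\<in>B. \<forall>y\<in>B. x \<noteq> y \<longrightarrow> d \<le> hamming x y"
    and d: "(1 - 1 / real q) * n < d"
  shows "card B \<le> q * d"
proof -
  have qn: "real ((q - 1) * n) = real q * ((1 - 1 / real q) * n)"
    using q by (simp add: of_nat_diff field_simps)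
  also have "\<dots> < real (q * d)"
    using d q by simp
  finally have "(q - 1) * n + 1 \<le> q * d"
    by (simp only: of_nat_less_iff Suc_eq_plus1 [symmetric] Suc_le_eq)
  then have "real ((q - 1) * n) + 1 \<le> real (q * d)"
    by (metis of_nat_add of_nat_le_iff of_nat_1)
  moreover have "real q * (d - (1 - 1 / real q) * n) = real (q * d) - real q * ((1 - 1 / real q) * n)"
    by (simp add: algebra_simps)
  ultimately have "1 \<le> real q * (d - (1 - 1 / real q) * n)"
    using qn by linarith
  then have "card B \<le> real (card B) * (real q * (d - (1 - 1 / real q) * n))"
    using mult_left_mono[of 1] by fastforce
  also have "\<dots> \<le> real q * d"
    using plotkin_bound[OF q B dist] q by (simp add: mult.left_commute mult_left_mono)
  finally show ?thesis
    by (simp flip: of_nat_mult)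
qed


theorem elias_bound:
  assumes q: "2 \<le> q" and n: "0 < n" and C: "C \<subseteq> words q n"
    and dist: "\<forall>x\<in>C. \<forall>y\<in>C. x \<noteq> y \<longrightarrow> d \<le> hamming x y"
    and w: "1 \<le> real d - 2 * real w + real w ^ 2 / n"
  shows "card C * sphere_size q n w \<le> d * real q ^ n"
proof -
  obtain z where z: "z \<in> words q n"
    and dense: "card C * ((n choose w) * (q - 1) ^ w) \<le> card {c \<in> C. hamming c z = w} * q ^ n"
    using exists_center_with_dense_sphere[of q C n w] q C by auto
  define B where "B = {c \<in> C. hamming c z = w}"
  have B: "B \<subseteq> words q n"
    using C by (auto simp: B_def)
  have B_dist: "\<forall>x\<in>B. \<forall>y\<in>B. x \<noteq> y \<longrightarrow> d \<le> hamming x y"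
    using dist by (simp add: B_def)
  have "\<forall>x\<in>B. hamming x z = w"
    by (simp add: B_def)
  then have johnson: "card B * (real d - 2 * real w + real w ^ 2 / n) \<le> d"
    by (rule johnson_bound_on_sphere[OF q n B z B_dist])
  have "real (card B) * 1 \<le> card B * (real d - 2 * real w + real w ^ 2 / n)"
    using w by (intro mult_left_mono) auto
  then have card_B: "real (card B) \<le> d"
    using johnson by linarith
  have "card C * sphere_size q n w = real (card C * ((n choose w) * (q - 1) ^ w))"
    using q by (simp add: sphere_size_eq)
  also have "\<dots> \<le> real (card B * q ^ n)"
    using dense unfolding B_def by (simp only: of_nat_le_iff)
  also have "\<dots> \<le> d * real q ^ n"
    using card_B by (simp add: mult_right_mono)
  finally show ?thesis .
qed


lemma V_ball_div_power_le:
  assumes q: "2 \<le> q" and n: "2 \<le> n"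
    and t: "real t \<le> (1 - 1 / real q) * n - 8 * sqrt (n * ln n)"
  shows "V_ball q n t / real q ^ n \<le> 1 / real n ^ 8"
proof -
  define \<delta> where "\<delta> = (1 - 1 / real q) * n - real t"
  have "0 < ln (real n)"
    using n by simp
  then have \<delta>_ge: "8 * sqrt (n * ln n) \<le> \<delta>" and sqrt_pos: "0 < sqrt (n * ln n)"
    using t n by (simp_all add: \<delta>_def)
  have "V_ball q n t / real q ^ n \<le> exp (- \<delta>\<^sup>2 / (8 * real n))"
  proof (rule V_ball_tail_bound[OF q])
    show "0 < \<delta>"
      using \<delta>_ge sqrt_pos by linarith
    show "\<delta> \<le> real n"
      using q by (simp add: \<delta>_def algebra_simps)
  qed (simp add: \<delta>_def)
  also have "\<dots> \<le> exp (- (8 * ln n))"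
  proof -
    have "(8 * sqrt (n * ln n))\<^sup>2 \<le> \<delta>\<^sup>2"
      using \<delta>_ge sqrt_pos by (intro power_mono) auto
    then show ?thesis
      using n \<open>0 < ln (real n)\<close> by (simp add: power_mult_distrib field_simps)
  qed
  also have "\<dots> = 1 / real n ^ 8"
  proof -
    have "8 * ln (real n) = ln (real n ^ 8)"
      using n by (simp add: ln_realpow)
    then show ?thesis
      using n by (simp add: exp_minus inverse_eq_divide)
  qed
  finally show ?thesis .
qed

text \<open>If \<open>t\<^sup>5 \<le> n\<^sup>3\<close>, the bound \<open>f \<le> 3t/n\<close> already makes \<open>f\<^sup>2\<^sup>5\<close> polynomially small; otherwise
  \<open>k + 1 > t\<^sup>2/4n > n\<^bsup>1/5\<^esup>/4\<close> and \<open>f \<le> 1/2\<close> make \<open>f\<^sup>k\<close> superpolynomially small.\<close>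

lemma power_small_ratio_le:
  fixes f t :: real and n k :: nat
  assumes f0: "0 \<le> f" and f1: "f \<le> 1 / 2" and f3: "f \<le> 3 * t / n"
    and k25: "25 \<le> k" and k: "t\<^sup>2 / (4 * real n) < real k + 1" and n: "0 < n" and t0: "0 \<le> t"
  shows "f ^ k \<le> 3 ^ 25 / real n ^ 10 + 2 powr (1 - root 5 n / 4)"
proof (cases "t ^ 5 \<le> real n ^ 3")
  case True
  have "f ^ k \<le> f ^ 25"
    using f0 f1 k25 by (intro power_decreasing) auto
  also have "\<dots> \<le> (3 * t / n) ^ 25"
    using f0 f3 by (intro power_mono) auto
  also have "\<dots> = 3 ^ 25 * (t ^ 5) ^ 5 / real n ^ 25"
    by (simp add: power_divide power_mult_distrib flip: power_mult)
  also have "\<dots> \<le> 3 ^ 25 * (real n ^ 3) ^ 5 / real n ^ 25"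
    using True t0 by (intro divide_right_mono mult_left_mono power_mono) auto
  also have "\<dots> = 3 ^ 25 / real n ^ 10"
    using n by (simp add: field_simps flip: power_mult power_add)
  finally show ?thesis
    by (smt (verit) powr_gt_zero)
next
  case False
  have "real n = (real n ^ 3)\<^sup>2 / real n ^ 5"
    using n by (simp add: eval_nat_numeral field_simps)
  also have "\<dots> < (t ^ 5)\<^sup>2 / real n ^ 5"
    using False n by (intro divide_strict_right_mono power_strict_mono) auto
  also have "\<dots> = (t\<^sup>2 / n) ^ 5"
    by (simp add: power_divide flip: power_mult)
  finally have "real n < (t\<^sup>2 / n) ^ 5" .
  then have "root 5 n < root 5 ((t\<^sup>2 / n) ^ 5)"
    by (intro real_root_less_mono) auto
  also have "\<dots> = t\<^sup>2 / n"
    using t0 n by (intro real_root_power_cancel) auto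
  also have "\<dots> < 4 * (real k + 1)"
    using k n by (simp add: field_simps)
  finally have "- real k \<le> 1 - root 5 n / 4"
    by simp
  have "f ^ k \<le> (1 / 2) ^ k"
    using f0 f1 by (intro power_mono) auto
  also have "\<dots> = 2 powr (- real k)"
    by (simp add: powr_minus powr_realpow power_divide inverse_eq_divide)
  also have "\<dots> \<le> 2 powr (1 - root 5 n / 4)"
    using \<open>- real k \<le> 1 - root 5 n / 4\<close> by (intro powr_mono) auto
  finally show ?thesis
    by (smt (verit) divide_nonneg_nonneg zero_le_power of_nat_0_le_iff)
qed

text \<open>The last conclusion is the hypothesis of the Johnson bound for minimum distance \<open>2t+1\<close> on the
  sphere of radius \<open>t + k\<close>.\<close>

lemma elias_shift_bounds:
  fixes n t :: nat
  assumes n: "0 < n" and t: "10 * sqrt n < t" and tn: "2 * t \<le> n"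
  defines "k \<equiv> t\<^sup>2 div (4 * n)"
  shows "25 \<le> k" and "real t ^ 2 / (4 * real n) < real k + 1" and "8 * k \<le> t"
    and "1 \<le> real (2 * t + 1) - 2 * real (t + k) + real (t + k) ^ 2 / n"
proof -
  have "(10 * sqrt n)\<^sup>2 < (real t)\<^sup>2"
    using t by (intro power_strict_mono) auto
  then have "100 * n < t\<^sup>2"
    by (simp add: power_mult_distrib flip: of_nat_power of_nat_less_iff)
  then have "25 * (4 * n) div (4 * n) \<le> t\<^sup>2 div (4 * n)"
    by (intro div_le_mono) simp
  then show "25 \<le> k"
    unfolding k_def using n by simp
  have "t\<^sup>2 < (k + 1) * (4 * n)"
    unfolding k_def using n dividend_less_div_times by auto
  then have "real (t\<^sup>2) < real ((k + 1) * (4 * n))"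
    by (simp only: of_nat_less_iff)
  then have "real t ^ 2 < (real k + 1) * (4 * real n)"
    by (simp add: distrib_right)
  then show "real t ^ 2 / (4 * real n) < real k + 1"
    using n by (simp add: divide_less_eq)
  have "k * (4 * n) \<le> t\<^sup>2"
    unfolding k_def by (rule div_times_less_eq_dividend)
  then have "real (k * (4 * n)) \<le> real (t\<^sup>2)"
    by (simp only: of_nat_le_iff)
  then have k4: "4 * real n * real k \<le> real t ^ 2"
    by (simp add: algebra_simps)
  also have "\<dots> \<le> real t * (real n / 2)"
    using tn unfolding power2_eq_square by (intro mult_left_mono) auto
  finally have "real n * (8 * real k) \<le> real n * real t"
    by (simp add: algebra_simps)
  then show "8 * k \<le> t"
    using n by (simp add: mult_le_cancel_left_pos flip: of_nat_le_iff)
  have "4 * k \<le> real t ^ 2 / n"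
    using k4 n by (simp add: le_divide_eq algebra_simps)
  also have "\<dots> \<le> real (t + k) ^ 2 / n"
    by (intro divide_right_mono power_mono) auto
  finally show "1 \<le> real (2 * t + 1) - 2 * real (t + k) + real (t + k) ^ 2 / n"
    by simp
qed

lemma elias_ratio_bounds:
  fixes t w n :: nat and f :: real
  assumes q: "2 \<le> q" and w: "8 * w \<le> 9 * t" and small: "real (2 * t + 1) \<le> (1 - 1 / real q) * n"
  defines "f \<equiv> w / ((real n - w) * (real q - 1))"
  shows "w < n" and "f \<le> 1 / 2" and "f \<le> 3 * real t / n"
proof -
  have t: "2 * real t + 1 \<le> (1 - 1 / real q) * n"
    using small by simp
  have "(1 - 1 / real q) * n \<le> n"
    by (simp add: algebra_simps)
  then have tn: "16 * real t \<le> 8 * real n" and n: "0 < real n"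
    using t by linarith+
  have w98: "8 * real w \<le> 9 * real t"
    using w by (simp flip: of_nat_le_iff)
  then have nw: "7 * real n \<le> 16 * real n - 16 * real w"
    using tn by linarith
  then show "w < n"
    using n by (simp flip: of_nat_less_iff)
  have nw_pos: "0 < real n - w"
    using \<open>w < n\<close> by simp
  have q1: "1 \<le> real q - 1"
    using q by simp
  have "f \<le> w / (real n - w)"
    unfolding f_def using nw_pos q1 by (intro divide_left_mono) (auto intro: mult_pos_pos)
  also have "\<dots> \<le> 3 * real t / n"
  proof -
    have "real n * w \<le> real n * (9 / 8 * t)" and "3 * real t * w \<le> 3 * real t * (9 / 16 * n)"
      using w98 nw by (intro mult_left_mono; simp)+
    then have "real w * n \<le> 3 * real t * (real n - w)"
      using mult_nonneg_nonneg[of "real n" "real t"] by (simp add: algebra_simps, linarith)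
    then show ?thesis
      using nw_pos n by (simp add: divide_le_eq le_divide_eq mult.commute)
  qed
  finally show "f \<le> 3 * real t / n" .
  have "16 * real q * ((real q + 1) * real w) \<le> 18 * real q * (real q + 1) * t"
    using mult_left_mono[OF w98, of "2 * real q * (real q + 1)"] by (simp add: algebra_simps)
  also have "\<dots> \<le> 9 * (real q + 1) * (real q * (1 - 1 / real q) * n)"
  proof -
    have "2 * real t \<le> (1 - 1 / real q) * n"
      using t by linarith
    from mult_left_mono[OF this, of "9 * real q * (real q + 1)"] show ?thesis
      by (simp add: ac_simps)
  qed
  also have "\<dots> = 9 * (real q + 1) * ((real q - 1) * n)"
    using q by (simp add: field_simps)
  also have "\<dots> \<le> 16 * real q * ((real q - 1) * n)"
    using q by (intro mult_right_mono) auto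
  finally have "(real q + 1) * w \<le> (real q - 1) * n"
    using q by (subst (asm) mult_le_cancel_left_pos) auto
  then have "2 * real w \<le> (real n - w) * (real q - 1)"
    by (simp add: algebra_simps)
  then show "f \<le> 1 / 2"
    unfolding f_def using nw_pos q1 by (simp add: divide_le_eq)
qed

lemma normalized_code_le_plotkin_regime:
  assumes q: "2 \<le> q" and n: "2 \<le> n" and C: "C \<subseteq> words q n"
    and dist: "\<forall>x\<in>C. \<forall>y\<in>C. x \<noteq> y \<longrightarrow> 2 * t + 1 \<le> hamming x y"
    and large: "(1 - 1 / real q) * n < real (2 * t + 1)"
    and t: "real t \<le> (1 - 1 / real q) * n - 8 * sqrt (n * ln n)"
  shows "real n * card C * V_ball q n t / real q ^ n \<le> real q * (2 * real n + 1) / real n ^ 7"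
proof -
  have "(1 - 1 / real q) * n \<le> n" and "0 \<le> sqrt (n * ln n)"
    using n by (simp_all add: algebra_simps)
  then have "2 * real t + 1 \<le> 2 * n + 1"
    using t by linarith
  moreover have "card C \<le> q * (2 * t + 1)"
    by (rule card_code_le_of_plotkin_regime[OF q C dist large])
  then have "real (card C) \<le> real (q * (2 * t + 1))"
    by (simp only: of_nat_le_iff)
  then have "real (card C) \<le> real q * (2 * real t + 1)"
    by (simp add: distrib_left)
  ultimately have card_C: "real (card C) \<le> real q * (2 * real n + 1)"
    using mult_left_mono[of "2 * real t + 1" "2 * real n + 1" "real q"] by (simp add: add.commute)
  have "real n * card C * V_ball q n t / real q ^ n = real n * card C * (V_ball q n t / real q ^ n)"
    by simp
  also have "\<dots> \<le> real n * (real q * (2 * real n + 1)) * (1 / real n ^ 8)"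
    using card_C V_ball_div_power_le[OF q n t] V_ball_pos[of q n t] q
    by (intro mult_mono) (auto intro: mult_left_mono)
  also have "\<dots> = real q * (2 * real n + 1) / real n ^ 7"
    using n by (simp add: field_simps power_eq_if)
  finally show ?thesis .
qed

lemma normalized_code_le_elias_regime:
  assumes q: "2 \<le> q" and C: "C \<subseteq> words q n"
    and dist: "\<forall>x\<in>C. \<forall>y\<in>C. x \<noteq> y \<longrightarrow> 2 * t + 1 \<le> hamming x y"
    and t_low: "10 * sqrt n < t" and small: "real (2 * t + 1) \<le> (1 - 1 / real q) * n"
  shows "real n * card C * V_ball q n t / real q ^ n
    \<le> real n * (real n + 1) * (2 * real n + 1) * (3 ^ 25 / real n ^ 10 + 2 powr (1 - root 5 n / 4))"
proof -
  define k where "k = t\<^sup>2 div (4 * n)"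
  define f where "f = real (t + k) / ((real n - real (t + k)) * (real q - 1))"
  have "(1 - 1 / real q) * n \<le> n"
    by (simp add: algebra_simps)
  then have tn: "2 * t + 1 \<le> n"
    using small by (simp flip: of_nat_le_iff)
  then have n: "0 < n"
    by simp
  have "2 * t \<le> n"
    using tn by simp
  note shift = elias_shift_bounds[OF n t_low this, folded k_def]
  have "8 * (t + k) \<le> 9 * t"
    using shift(3) tn by simp
  note ratio = elias_ratio_bounds[OF q this small, folded f_def]
  have "0 \<le> f"
    using ratio q by (simp add: f_def)
  have "V_ball q n t \<le> (real t + 1) * f ^ k * sphere_size q n (t + k)"
    using ratio small by (intro V_ball_le_sphere_size[OF q _ f_def]) simp_all
  then have "real n * card C * V_ball q n t / real q ^ n
      \<le> real n * card C * ((real t + 1) * f ^ k * sphere_size q n (t + k)) / real q ^ n"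
    by (intro divide_right_mono mult_left_mono) auto
  also have "\<dots> = real n * (real t + 1) * f ^ k * (card C * sphere_size q n (t + k)) / real q ^ n"
    by (simp add: ac_simps)
  also have "\<dots> \<le> real n * (real t + 1) * f ^ k * ((2 * real t + 1) * real q ^ n) / real q ^ n"
    using elias_bound[OF q n C dist shift(4)] \<open>0 \<le> f\<close>
    by (intro divide_right_mono mult_left_mono) (auto simp: add.commute)
  also have "\<dots> = real n * (real t + 1) * (2 * real t + 1) * f ^ k"
    using q by simp
  also have "\<dots> \<le> real n * (real n + 1) * (2 * real n + 1) * (3 ^ 25 / real n ^ 10 + 2 powr (1 - root 5 n / 4))"
  proof (intro mult_mono)
    show "f ^ k \<le> 3 ^ 25 / real n ^ 10 + 2 powr (1 - root 5 n / 4)"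
      using ratio shift n \<open>0 \<le> f\<close> by (intro power_small_ratio_le[of f "real t"]) simp_all
  qed (use tn \<open>0 \<le> f\<close> in auto)
  finally show ?thesis .
qed


section \<open>Asymptotics\<close>

definition code_ratio_bound :: "nat \<Rightarrow> nat \<Rightarrow> real" where
  "code_ratio_bound q n = real q * (2 * real n + 1) / real n ^ 7
     + real n * (real n + 1) * (2 * real n + 1) * (3 ^ 25 / real n ^ 10 + 2 powr (1 - root 5 n / 4))"

lemma code_ratio_bound_tendsto_zero: "code_ratio_bound q \<longlonglongrightarrow> 0"
  unfolding code_ratio_bound_def by real_asymp

lemma normalized_A_code_le:
  assumes q: "2 \<le> q" and n: "2 \<le> n" and t_low: "10 * sqrt n < t"
    and t_up: "real t \<le> (1 - 1 / real q) * n - 8 * sqrt (n * ln n)"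
  shows "real n * A_code q n (2 * t + 1) / H_bound q n t \<le> code_ratio_bound q n"
proof -
  obtain C where C: "C \<subseteq> words q n" and dist: "\<forall>x\<in>C. \<forall>y\<in>C. x \<noteq> y \<longrightarrow> 2 * t + 1 \<le> hamming x y"
    and A: "A_code q n (2 * t + 1) = card C"
    by (rule obtain_optimal_code)
  have "real n * A_code q n (2 * t + 1) / H_bound q n t = real n * card C * V_ball q n t / real q ^ n"
    unfolding A H_bound_def using V_ball_pos[of q n t] q by simp
  also have "\<dots> \<le> code_ratio_bound q n"
  proof (cases "(1 - 1 / real q) * n < real (2 * t + 1)")
    case True
    have "0 \<le> real n * (real n + 1) * (2 * real n + 1) * (3 ^ 25 / real n ^ 10 + 2 powr (1 - root 5 n / 4))"
      by simp
    then show ?thesis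
      using normalized_code_le_plotkin_regime[OF q n C dist True t_up]
      unfolding code_ratio_bound_def by linarith
  next
    case False
    have "0 \<le> real q * (2 * real n + 1) / real n ^ 7"
      by simp
    then show ?thesis
      using normalized_code_le_elias_regime[OF q C dist t_low] False
      unfolding code_ratio_bound_def by linarith
  qed
  finally show ?thesis .
qed

lemma exists_nat_in_interval:
  fixes a b :: real
  assumes "0 \<le> a" and "a + 1 < b"
  shows "\<exists>t::nat. a < t \<and> t \<le> b"
proof (intro exI conjI)
  show "a < real (nat \<lfloor>b\<rfloor>)" and "real (nat \<lfloor>b\<rfloor>) \<le> b"
    using assms of_int_floor_le[of b] real_of_int_floor_gt_diff_one[of b] by linarith+
qed

lemma tendsto_SUP_zero:
  fixes F :: "nat \<Rightarrow> 'a \<Rightarrow> real"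
  assumes ev: "eventually (\<lambda>n. T n \<noteq> {} \<and> (\<forall>t\<in>T n. 0 \<le> F n t \<and> F n t \<le> g n)) sequentially"
    and g: "g \<longlonglongrightarrow> 0"
  shows "(\<lambda>n. SUP t\<in>T n. F n t) \<longlonglongrightarrow> 0"
proof (rule tendsto_sandwich[OF _ _ tendsto_const g])
  have bounds: "0 \<le> (SUP t\<in>T n. F n t) \<and> (SUP t\<in>T n. F n t) \<le> g n"
    if ne: "T n \<noteq> {}" and bnd: "\<forall>t\<in>T n. 0 \<le> F n t \<and> F n t \<le> g n" for n
  proof -
    obtain t where "t \<in> T n"
      using ne by blast
    moreover have "bdd_above (F n ` T n)"
      using bnd by (auto intro: bdd_aboveI2)
    ultimately show ?thesis
      using ne bnd by (auto intro: cSUP_upper2 cSUP_least)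
  qed
  have "eventually (\<lambda>n. 0 \<le> (SUP t\<in>T n. F n t) \<and> (SUP t\<in>T n. F n t) \<le> g n) sequentially"
    using ev by (rule eventually_mono) (use bounds in blast)
  then show "eventually (\<lambda>n. 0 \<le> (SUP t\<in>T n. F n t)) sequentially"
    and "eventually (\<lambda>n. (SUP t\<in>T n. F n t) \<le> g n) sequentially"
    by (auto elim: eventually_mono)
qed

theorem proposition5p2:
  fixes q :: nat
  assumes "q \<ge> 2"
  shows "\<exists>C::real. C > 0 \<and>
    ((\<lambda>n::nat. SUP t \<in> {t::nat. 10 * sqrt (real n) < real t \<and>
                  real t \<le> (1 - 1 / real q) * real n - C * sqrt (real n * ln (real n))}.
        real n * real (A_code q n (2 * t + 1)) / H_bound q n t) \<longlonglongrightarrow> 0)"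
proof (intro exI[of _ 8] conjI tendsto_SUP_zero[OF _ code_ratio_bound_tendsto_zero])
  have "eventually (\<lambda>n::nat. 10 * sqrt n + 8 * sqrt (n * ln n) + 1 < n / 2) sequentially"
    by real_asymp
  with eventually_ge_at_top[of 2]
  show "eventually (\<lambda>n. {t. 10 * sqrt n < real t \<and> real t \<le> (1 - 1 / real q) * n - 8 * sqrt (n * ln n)} \<noteq> {}
      \<and> (\<forall>t \<in> {t. 10 * sqrt n < real t \<and> real t \<le> (1 - 1 / real q) * n - 8 * sqrt (n * ln n)}.
            0 \<le> real n * A_code q n (2 * t + 1) / H_bound q n t
          \<and> real n * A_code q n (2 * t + 1) / H_bound q n t \<le> code_ratio_bound q n)) sequentially"
  proof eventually_elim
    case (elim n)
    have "n / 2 \<le> (1 - 1 / real q) * n"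
      using assms by (simp add: field_simps mult_left_mono)
    then have "10 * sqrt n + 1 < (1 - 1 / real q) * n - 8 * sqrt (n * ln n)"
      using elim(2) by linarith
    then have "\<exists>t::nat. 10 * sqrt n < t \<and> t \<le> (1 - 1 / real q) * n - 8 * sqrt (n * ln n)"
      by (intro exists_nat_in_interval) auto
    moreover have "0 \<le> real n * A_code q n (2 * t + 1) / H_bound q n t" for t
      using V_ball_pos[of q n t] assms by (intro divide_nonneg_pos) (auto simp: H_bound_def)
    ultimately show ?case
      using normalized_A_code_le[OF assms elim(1)] by auto
  qed
  show "(8::real) > 0"
    by simp
qed

end
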